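(* Let $(M,\varphi,\xi,\eta,g)$ be a Sasaki-like almost contact B-metric manifold with the curvature property $Q\cdot R=0$, i.e. $R(x,y,z,Qw)-R(Qx,y,z,w)-R(x,Qy,z,w)-R(x,y,Qz,w)=0$ for all vector fields $x,y,z,w$. Then the manifold does not admit a Ricci-like soliton with vertical potential (i.e. with potential $v=k\xi$ for a differentiable function $k$).
   Context: An almost contact B-metric manifold $(M,\varphi,\xi,\eta,g)$ is a $(2n+1)$-dimensional manifold with a $(1,1)$-tensor $\varphi$, a vector field $\xi$, a 1-form $\eta$ and a pseudo-Riemannian metric $g$ of signature $(n+1,n)$ such that $\varphi\xi=0$, $\varphi^2=-\mathrm{Id}+\eta\otimes\xi$, $\eta\circ\varphi=0$, $\eta(\xi)=1$, and $g(\varphi x,\varphi y)=-g(x,y)+\eta(x)\eta(y)$. The associated B-metric is $\tilde g(x,y)=g(x,\varphi y)+\eta(x)\eta(y)$. With $\nabla$ the Levi-Civita connection of $g$, the manifold is Sasaki-like if $(\nabla_x\varphi)y=-g(x,y)\xi-\eta(y)x+2\eta(x)\eta(y)\xi$. $R$ is the curvature tensor of $\nabla$, $R(x,y,z,w)=g(R(x,y)z,w)$, $\rho$ the Ricci tensor and $Q$ the Ricci operator, $g(Qx,y)=\rho(x,y)$. It admits a Ricci-like soliton with potential vector field $v$ and constants $(\lambda,\mu,\nu)$ if $\frac12\mathcal L_v g+\rho+\lambda g+\mu\tilde g+\nu\,\eta\otimes\eta=0$, where $\mathcal L$ is the Lie derivative. *)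

theory Defs
  imports "HOL-Analysis.Analysis"
begin

text \<open>Local (coordinate) model: the manifold is an open set U of real^'n,
  tangent vectors are elements of real^'n, vector fields are maps U -> real^'n,
  the metric is a symmetric-matrix valued field G, phi a matrix field,
  xi a vector field and eta a covector field (eta(x) = eta p \<bullet> x).\<close>

type_synonym 'n vf = "real^'n \<Rightarrow> real^'n"

fun dpart :: "'n::finite list \<Rightarrow> (real^'n \<Rightarrow> 'b::real_normed_vector) \<Rightarrow> real^'n \<Rightarrow> 'b" where
  "dpart [] f = f"
| "dpart (i # is) f = (\<lambda>p. frechet_derivative (dpart is f) (at p) (axis i 1))"

definition cinf_on :: "(real^'n::finite) set \<Rightarrow> (real^'n \<Rightarrow> 'b::real_normed_vector) \<Rightarrow> bool" where
  "cinf_on U f \<longleftrightarrow> (\<forall>is p. p \<in> U \<longrightarrow> dpart is f differentiable (at p))"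

definition dd :: "(real^'n::finite \<Rightarrow> 'b::real_normed_vector) \<Rightarrow> real^'n \<Rightarrow> real^'n \<Rightarrow> 'b" where
  "dd f p u = frechet_derivative f (at p) u"

definition gmet :: "(real^'n::finite \<Rightarrow> real^'n^'n) \<Rightarrow> real^'n \<Rightarrow> real^'n \<Rightarrow> real^'n \<Rightarrow> real" where
  "gmet G p u w = u \<bullet> (G p *v w)"

text \<open>Christoffel symbols of the Levi-Civita connection of G.\<close>
definition chr :: "(real^'n::finite \<Rightarrow> real^'n^'n) \<Rightarrow> real^'n \<Rightarrow> real^'n \<Rightarrow> real^'n \<Rightarrow> real^'n" where
  "chr G p u w = matrix_inv (G p) *v (\<chi> k. (1/2) *
      (w \<bullet> (dd G p u *v axis k 1) + u \<bullet> (dd G p w *v axis k 1)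
       - u \<bullet> (dd G p (axis k 1) *v w)))"

definition cov :: "(real^'n::finite \<Rightarrow> real^'n^'n) \<Rightarrow> 'n vf \<Rightarrow> 'n vf \<Rightarrow> 'n vf" where
  "cov G X Y = (\<lambda>p. dd Y p (X p) + chr G p (X p) (Y p))"

definition bracket :: "'n::finite vf \<Rightarrow> 'n vf \<Rightarrow> 'n vf" where
  "bracket X Y = (\<lambda>p. dd Y p (X p) - dd X p (Y p))"

definition curv :: "(real^'n::finite \<Rightarrow> real^'n^'n) \<Rightarrow> 'n vf \<Rightarrow> 'n vf \<Rightarrow> 'n vf \<Rightarrow> 'n vf" where
  "curv G X Y Z = (\<lambda>p. cov G X (cov G Y Z) p - cov G Y (cov G X Z) p - cov G (bracket X Y) Z p)"

definition R4 :: "(real^'n::finite \<Rightarrow> real^'n^'n) \<Rightarrow> 'n vf \<Rightarrow> 'n vf \<Rightarrow> 'n vf \<Rightarrow> 'n vf \<Rightarrow> real^'n \<Rightarrow> real" where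
  "R4 G X Y Z W p = gmet G p (curv G X Y Z p) (W p)"

definition ricci :: "(real^'n::finite \<Rightarrow> real^'n^'n) \<Rightarrow> 'n vf \<Rightarrow> 'n vf \<Rightarrow> real^'n \<Rightarrow> real" where
  "ricci G Y Z p = (\<Sum>i\<in>UNIV. curv G (\<lambda>_. axis i 1) Y Z p $ i)"

text \<open>Ricci operator Q, g(QX,Y) = rho(X,Y).\<close>
definition ricci_op :: "(real^'n::finite \<Rightarrow> real^'n^'n) \<Rightarrow> 'n vf \<Rightarrow> 'n vf" where
  "ricci_op G X = (\<lambda>p. matrix_inv (G p) *v (\<chi> j. ricci G X (\<lambda>_. axis j 1) p))"

definition metric_sig :: "(real^'n::finite) set \<Rightarrow> nat \<Rightarrow> (real^'n \<Rightarrow> real^'n^'n) \<Rightarrow> bool" where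
  "metric_sig U n G \<longleftrightarrow> (\<forall>p\<in>U. transpose (G p) = G p \<and> invertible (G p) \<and>
     (\<exists>P N. subspace P \<and> subspace N \<and> dim P = n + 1 \<and> dim N = n \<and>
        (\<forall>u\<in>P. u \<noteq> 0 \<longrightarrow> gmet G p u u > 0) \<and>
        (\<forall>u\<in>N. u \<noteq> 0 \<longrightarrow> gmet G p u u < 0)))"

definition smooth_vf :: "(real^'n::finite) set \<Rightarrow> 'n vf \<Rightarrow> bool" where
  "smooth_vf U X \<longleftrightarrow> cinf_on U X"

definition acbm :: "(real^'n::finite) set \<Rightarrow> nat \<Rightarrow> (real^'n \<Rightarrow> real^'n^'n) \<Rightarrow> 'n vf \<Rightarrow> 'n vf
     \<Rightarrow> (real^'n \<Rightarrow> real^'n^'n) \<Rightarrow> bool" where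
  "acbm U n Phi xi eta G \<longleftrightarrow>
     open U \<and> CARD('n) = 2 * n + 1 \<and> n \<ge> 1 \<and>
     cinf_on U Phi \<and> cinf_on U xi \<and> cinf_on U eta \<and> cinf_on U G \<and>
     metric_sig U n G \<and>
     (\<forall>p\<in>U. Phi p *v xi p = 0 \<and> eta p \<bullet> xi p = 1 \<and>
        (\<forall>x. Phi p *v (Phi p *v x) = - x + (eta p \<bullet> x) *\<^sub>R xi p) \<and>
        (\<forall>x. eta p \<bullet> (Phi p *v x) = 0) \<and>
        (\<forall>x y. gmet G p (Phi p *v x) (Phi p *v y) = - gmet G p x y + (eta p \<bullet> x) * (eta p \<bullet> y)))"

definition gtil :: "(real^'n::finite \<Rightarrow> real^'n^'n) \<Rightarrow> (real^'n \<Rightarrow> real^'n^'n) \<Rightarrow> 'n vf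
    \<Rightarrow> real^'n \<Rightarrow> real^'n \<Rightarrow> real^'n \<Rightarrow> real" where
  "gtil G Phi eta p x y = gmet G p x (Phi p *v y) + (eta p \<bullet> x) * (eta p \<bullet> y)"

definition sasaki_like :: "(real^'n::finite) set \<Rightarrow> nat \<Rightarrow> (real^'n \<Rightarrow> real^'n^'n) \<Rightarrow> 'n vf \<Rightarrow> 'n vf
     \<Rightarrow> (real^'n \<Rightarrow> real^'n^'n) \<Rightarrow> bool" where
  "sasaki_like U n Phi xi eta G \<longleftrightarrow> acbm U n Phi xi eta G \<and>
     (\<forall>X Y. smooth_vf U X \<longrightarrow> smooth_vf U Y \<longrightarrow> (\<forall>p\<in>U.
        cov G X (\<lambda>q. Phi q *v Y q) p - Phi p *v cov G X Y p =
          - gmet G p (X p) (Y p) *\<^sub>R xi p - (eta p \<bullet> Y p) *\<^sub>R X p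
          + (2 * (eta p \<bullet> X p) * (eta p \<bullet> Y p)) *\<^sub>R xi p))"

definition QR_zero :: "(real^'n::finite) set \<Rightarrow> (real^'n \<Rightarrow> real^'n^'n) \<Rightarrow> bool" where
  "QR_zero U G \<longleftrightarrow> (\<forall>X Y Z W. smooth_vf U X \<longrightarrow> smooth_vf U Y \<longrightarrow> smooth_vf U Z \<longrightarrow> smooth_vf U W \<longrightarrow>
     (\<forall>p\<in>U. R4 G X Y Z (ricci_op G W) p - R4 G (ricci_op G X) Y Z W p
              - R4 G X (ricci_op G Y) Z W p - R4 G X Y (ricci_op G Z) W p = 0))"

definition lie_g :: "(real^'n::finite \<Rightarrow> real^'n^'n) \<Rightarrow> 'n vf \<Rightarrow> 'n vf \<Rightarrow> 'n vf \<Rightarrow> real^'n \<Rightarrow> real" where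
  "lie_g G v X Y p = dd (\<lambda>q. gmet G q (X q) (Y q)) p (v p)
      - gmet G p (bracket v X p) (Y p) - gmet G p (X p) (bracket v Y p)"

definition ricci_like_soliton :: "(real^'n::finite) set \<Rightarrow> (real^'n \<Rightarrow> real^'n^'n) \<Rightarrow> 'n vf \<Rightarrow> 'n vf
     \<Rightarrow> (real^'n \<Rightarrow> real^'n^'n) \<Rightarrow> 'n vf \<Rightarrow> real \<Rightarrow> real \<Rightarrow> real \<Rightarrow> bool" where
  "ricci_like_soliton U Phi xi eta G v lam mu nu \<longleftrightarrow>
     (\<forall>X Y. smooth_vf U X \<longrightarrow> smooth_vf U Y \<longrightarrow> (\<forall>p\<in>U.
        (1/2) * lie_g G v X Y p + ricci G X Y p + lam * gmet G p (X p) (Y p)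
        + mu * gtil G Phi eta p (X p) (Y p) + nu * (eta p \<bullet> X p) * (eta p \<bullet> Y p) = 0))"

end

theory Submission
  imports Defs
begin

text \<open>On a Sasaki-like manifold \<open>\<nabla>\<xi> = -\<phi>\<close>, hence \<open>R(x,y)\<xi> = \<eta>(y)x - \<eta>(x)y\<close> and
  \<open>Q\<xi> = 2n\<xi>\<close>. If a Ricci-like soliton has potential \<open>k\<xi>\<close>, the soliton equation on \<open>(x, \<xi>)\<close>
  gives \<open>dk = -(2n + \<lambda> + \<mu> + \<nu>)\<eta>\<close>, and then the soliton equation says that the Ricci operator is
  \<open>Q = (k - \<mu>)\<phi> - \<lambda> Id + (2n + \<lambda>) \<eta> \<otimes> \<xi>\<close>; in particular \<open>Q\<close> is differentiable and
  \<open>g\<close>-symmetric. Evaluating \<open>Q\<cdot>R = 0\<close> at \<open>(\<xi>, y, \<xi>, w)\<close> with \<open>y\<close> horizontal gives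
  \<open>4n g(y,w) = 0\<close> for all \<open>w\<close>, so \<open>y = 0\<close> by nondegeneracy of \<open>g\<close>. But \<open>\<phi>\<close> vanishes only on
  multiples of \<open>\<xi>\<close>, so in dimension \<open>2n+1 > 1\<close> some \<open>\<phi>u\<close> is a nonzero horizontal vector.\<close>

lemma bounded_bilinear_matrix_vector_mult:
  "bounded_bilinear (\<lambda>(A::real^'n::finite^'m::finite) (x::real^'n). A *v x)"
proof -
  have "bilinear (\<lambda>(A::real^'n::finite^'m::finite) (x::real^'n). A *v x)"
    unfolding bilinear_def
    by (auto intro!: linearI simp: matrix_vector_mult_add_rdistrib matrix_vector_right_distrib
        vec_eq_iff matrix_vector_mult_def sum_distrib_left sum.distrib algebra_simps)
  then show ?thesis by (simp add: bilinear_conv_bounded_bilinear)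
qed

lemma dd_has_derivative: "f differentiable (at p) \<Longrightarrow> (f has_derivative dd f p) (at p)"
  unfolding dd_def[abs_def] by (simp add: frechet_derivative_works)

lemma dd_eqI: "(f has_derivative f') (at p) \<Longrightarrow> dd f p = f'"
  unfolding dd_def[abs_def] by (metis frechet_derivative_at)

lemma dd_const [simp]: "dd (\<lambda>_. c) p = (\<lambda>_. 0)"
  unfolding dd_def[abs_def] by simp

lemma dd_cong_open:
  assumes "open U" "p \<in> U" "\<And>q. q \<in> U \<Longrightarrow> f q = g q"
  shows "dd f p = dd g p"
proof -
  have "(f has_derivative f') (at p) \<longleftrightarrow> (g has_derivative f') (at p)" for f'
    using has_derivative_transform_within_open assms by metis
  then show ?thesis unfolding dd_def frechet_derivative_def by simp
qed

lemma differentiable_cong_open: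
  assumes "open U" "p \<in> U" "\<And>q. q \<in> U \<Longrightarrow> f q = g q" "g differentiable (at p)"
  shows "f differentiable (at p)"
  using assms has_derivative_transform_within_open unfolding differentiable_def by metis

lemma dd_bounded_linear:
  assumes "bounded_linear L" "f differentiable (at p)"
  shows "dd (\<lambda>q. L (f q)) p u = L (dd f p u)"
  using dd_eqI[OF bounded_linear.has_derivative[OF assms(1) dd_has_derivative[OF assms(2)]]] by simp

lemma has_derivative_matrix_vector_mult:
  fixes A :: "real^'n::finite \<Rightarrow> real^'m::finite^'k::finite" and Y :: "real^'n \<Rightarrow> real^'m"
  assumes "A differentiable (at p)" "Y differentiable (at p)"
  shows "((\<lambda>q. A q *v Y q) has_derivative (\<lambda>u. A p *v dd Y p u + dd A p u *v Y p)) (at p)"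
  using bounded_bilinear.FDERIV[OF bounded_bilinear_matrix_vector_mult
      dd_has_derivative[OF assms(1)] dd_has_derivative[OF assms(2)]] .

lemma dd_matrix_vector_mult:
  fixes A :: "real^'n::finite \<Rightarrow> real^'m::finite^'k::finite" and Y :: "real^'n \<Rightarrow> real^'m"
  assumes "A differentiable (at p)" "Y differentiable (at p)"
  shows "dd (\<lambda>q. A q *v Y q) p u = A p *v dd Y p u + dd A p u *v Y p"
  using dd_eqI[OF has_derivative_matrix_vector_mult[OF assms]] by simp

lemma differentiable_matrix_vector_mult:
  fixes A :: "real^'n::finite \<Rightarrow> real^'m::finite^'k::finite" and Y :: "real^'n \<Rightarrow> real^'m"
  assumes "A differentiable (at p)" "Y differentiable (at p)"
  shows "(\<lambda>q. A q *v Y q) differentiable (at p)"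
  using has_derivative_matrix_vector_mult[OF assms] unfolding differentiable_def by blast

lemma dd_scaleR:
  assumes "k differentiable (at p)" "Y differentiable (at p)"
  shows "dd (\<lambda>q. k q *\<^sub>R Y q) p u = k p *\<^sub>R dd Y p u + dd k p u *\<^sub>R Y p"
  using dd_eqI[OF has_derivative_scaleR[OF dd_has_derivative[OF assms(1)] dd_has_derivative[OF assms(2)]]]
  by simp

lemma dd_gmet:
  assumes "G differentiable (at p)" "X differentiable (at p)" "Y differentiable (at p)"
  shows "dd (\<lambda>q. gmet G q (X q) (Y q)) p u
     = dd X p u \<bullet> (G p *v Y p) + X p \<bullet> (dd G p u *v Y p) + X p \<bullet> (G p *v dd Y p u)"
proof -
  have "((\<lambda>q. X q \<bullet> (G q *v Y q)) has_derivative
     (\<lambda>h. X p \<bullet> (G p *v dd Y p h + dd G p h *v Y p) + dd X p h \<bullet> (G p *v Y p))) (at p)"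
    using has_derivative_inner[OF dd_has_derivative[OF assms(2)]
        has_derivative_matrix_vector_mult[OF assms(1,3)]] .
  from dd_eqI[OF this] show ?thesis
    unfolding gmet_def by (simp add: inner_add_right algebra_simps)
qed

lemma dpart_const: "dpart is (\<lambda>_. c) = (\<lambda>_. if is = [] then c else 0)"
  by (induction "is") simp_all

lemma smooth_vf_const: "smooth_vf U (\<lambda>_. c)"
  unfolding smooth_vf_def cinf_on_def dpart_const by simp

lemma cinf_on_differentiable: "cinf_on U f \<Longrightarrow> p \<in> U \<Longrightarrow> f differentiable (at p)"
  unfolding cinf_on_def by (metis dpart.simps(1))

lemma gmet_add_left: "gmet G p (a + b) c = gmet G p a c + gmet G p b c"
  by (simp add: gmet_def inner_add_left)
lemma gmet_add_right: "gmet G p c (a + b) = gmet G p c a + gmet G p c b"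
  by (simp add: gmet_def inner_add_right matrix_vector_right_distrib)
lemma gmet_diff_left: "gmet G p (a - b) c = gmet G p a c - gmet G p b c"
  by (simp add: gmet_def inner_diff_left)
lemma gmet_diff_right: "gmet G p c (a - b) = gmet G p c a - gmet G p c b"
  by (simp add: gmet_def inner_diff_right matrix_vector_mult_diff_distrib)
lemma gmet_scaleR_left: "gmet G p (r *\<^sub>R a) c = r * gmet G p a c"
  by (simp add: gmet_def)
lemma gmet_scaleR_right: "gmet G p c (r *\<^sub>R a) = r * gmet G p c a"
  by (simp add: gmet_def matrix_vector_mult_scaleR)
lemma gmet_minus_left: "gmet G p (- a) c = - gmet G p a c"
  by (simp add: gmet_def)
lemma gmet_minus_right: "gmet G p c (- a) = - gmet G p c a"
  by (metis gmet_scaleR_right scaleR_minus1_left mult_minus1)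
lemma gmet_zero_left: "gmet G p 0 c = 0"
  by (simp add: gmet_def)
lemma gmet_zero_right: "gmet G p c 0 = 0"
  by (simp add: gmet_def)

lemmas gmet_simps = gmet_add_left gmet_add_right gmet_diff_left gmet_diff_right
  gmet_scaleR_left gmet_scaleR_right gmet_minus_left gmet_minus_right gmet_zero_left gmet_zero_right

lemma inner_symmetric_matrix: "transpose M = M \<Longrightarrow> (a::real^'n::finite) \<bullet> (M *v b) = b \<bullet> (M *v a)"
  by (metis dot_lmul_matrix inner_commute transpose_matrix_vector)

lemma matrix_inv_cancel:
  assumes "invertible A"
  shows "A *v (matrix_inv A *v x) = x" and "matrix_inv A *v (A *v x) = x"
proof -
  have "A ** matrix_inv A = mat 1 \<and> matrix_inv A ** A = mat 1"
    using assms unfolding invertible_def matrix_inv_def by (rule someI_ex)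
  then show "A *v (matrix_inv A *v x) = x" and "matrix_inv A *v (A *v x) = x"
    by (simp_all add: matrix_vector_mul_assoc)
qed

lemma linear_real_sum_axis:
  assumes "linear (f :: real^'n::finite \<Rightarrow> real)"
  shows "(\<Sum>k\<in>UNIV. z$k * f (axis k 1)) = f z"
proof -
  have "f z = f (\<Sum>k\<in>UNIV. z$k *\<^sub>R axis k 1)"
    using basis_expansion[of z] by (simp add: scalar_mult_eq_scaleR)
  then show ?thesis
    by (simp add: linear_sum[OF assms] linear_scale[OF assms])
qed

definition chr_lower :: "(real^'n::finite \<Rightarrow> real^'n^'n) \<Rightarrow> real^'n \<Rightarrow> real^'n \<Rightarrow> real^'n \<Rightarrow> real^'n" where
  "chr_lower G p u w = (\<chi> k. (1/2) *
      (w \<bullet> (dd G p u *v axis k 1) + u \<bullet> (dd G p w *v axis k 1) - u \<bullet> (dd G p (axis k 1) *v w)))"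

lemma chr_eq_chr_lower: "chr G p u w = matrix_inv (G p) *v chr_lower G p u w"
  unfolding chr_def chr_lower_def by simp

locale sasaki_like_manifold =
  fixes U :: "(real^'n::finite) set" and n :: nat
    and Phi G :: "real^'n \<Rightarrow> real^'n^'n" and xi eta :: "real^'n \<Rightarrow> real^'n"
  assumes sasaki_like: "sasaki_like U n Phi xi eta G"
begin

lemma
  shows open_U: "open U" and card_eq: "CARD('n) = 2 * n + 1" and n_ge_1: "n \<ge> 1"
    and smooth_xi: "smooth_vf U xi"
  using sasaki_like unfolding sasaki_like_def acbm_def smooth_vf_def by auto

lemma
  assumes "p \<in> U"
  shows differentiable_Phi: "Phi differentiable (at p)"
    and differentiable_xi: "xi differentiable (at p)"
    and differentiable_eta: "eta differentiable (at p)"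
    and differentiable_G: "G differentiable (at p)"
  using sasaki_like assms cinf_on_differentiable unfolding sasaki_like_def acbm_def by auto

lemma
  assumes "p \<in> U"
  shows Phi_xi: "Phi p *v xi p = 0"
    and eta_xi: "eta p \<bullet> xi p = 1"
    and Phi_Phi: "Phi p *v (Phi p *v x) = - x + (eta p \<bullet> x) *\<^sub>R xi p"
    and eta_Phi: "eta p \<bullet> (Phi p *v x) = 0"
    and gmet_Phi_Phi: "gmet G p (Phi p *v x) (Phi p *v y) = - gmet G p x y + (eta p \<bullet> x) * (eta p \<bullet> y)"
  using sasaki_like assms unfolding sasaki_like_def acbm_def by auto

lemma
  assumes "p \<in> U"
  shows G_symmetric: "transpose (G p) = G p" and G_invertible: "invertible (G p)"
  using sasaki_like assms unfolding sasaki_like_def acbm_def metric_sig_def by auto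

lemma sasaki_like_cov:
  "smooth_vf U X \<Longrightarrow> smooth_vf U Y \<Longrightarrow> p \<in> U \<Longrightarrow>
     cov G X (\<lambda>q. Phi q *v Y q) p - Phi p *v cov G X Y p =
       - gmet G p (X p) (Y p) *\<^sub>R xi p - (eta p \<bullet> Y p) *\<^sub>R X p
       + (2 * (eta p \<bullet> X p) * (eta p \<bullet> Y p)) *\<^sub>R xi p"
  using sasaki_like unfolding sasaki_like_def by blast

lemma gmet_commute: "p \<in> U \<Longrightarrow> gmet G p u w = gmet G p w u"
  unfolding gmet_def by (metis G_symmetric inner_symmetric_matrix)

lemma gmet_xi_right: "p \<in> U \<Longrightarrow> gmet G p u (xi p) = eta p \<bullet> u"
  using gmet_Phi_Phi[of p u "xi p"] by (simp add: Phi_xi eta_xi gmet_simps)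

lemma gmet_xi_left: "p \<in> U \<Longrightarrow> gmet G p (xi p) u = eta p \<bullet> u"
  using gmet_xi_right gmet_commute by metis

lemma gmet_Phi_commute:
  assumes p: "p \<in> U"
  shows "gmet G p (Phi p *v x) y = gmet G p x (Phi p *v y)"
proof -
  have "- gmet G p x (Phi p *v y) = gmet G p (Phi p *v x) (Phi p *v (Phi p *v y))"
    using gmet_Phi_Phi[OF p, of x "Phi p *v y"] eta_Phi[OF p] by simp
  also have "\<dots> = - gmet G p (Phi p *v x) y"
    using Phi_Phi[OF p] gmet_xi_right[OF p] eta_Phi[OF p] by (simp add: gmet_simps)
  finally show ?thesis by simp
qed

lemma vertical_if_Phi_zero: "p \<in> U \<Longrightarrow> Phi p *v v = 0 \<Longrightarrow> v = (eta p \<bullet> v) *\<^sub>R xi p"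
  using Phi_Phi[of p v] by simp

lemma gmet_nondegenerate:
  assumes "p \<in> U" "\<And>w. gmet G p y w = 0"
  shows "y = 0"
proof -
  have "y \<bullet> y = gmet G p y (matrix_inv (G p) *v y)"
    unfolding gmet_def matrix_inv_cancel(1)[OF G_invertible[OF assms(1)]] ..
  then show ?thesis using assms(2) by simp
qed

lemma Phi_nonzero:
  assumes "p \<in> U"
  obtains u where "Phi p *v u \<noteq> 0"
proof (rule ccontr)
  assume "\<not> thesis"
  with that have "Phi p *v u = 0" for u by blast
  then have "u = (eta p \<bullet> u) *\<^sub>R xi p" for u
    using vertical_if_Phi_zero[OF assms] by blast
  then have "UNIV \<subseteq> span {xi p}"
    by (metis span_base span_scale singletonI subsetI)
  then have "dim (UNIV :: (real^'n) set) \<le> 1"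
    using dim_le_card[of UNIV "{xi p}"] by simp
  then show False using card_eq n_ge_1 by simp
qed

lemma dd_G_symmetric:
  assumes p: "p \<in> U"
  shows "transpose (dd G p u) = dd G p u"
proof -
  have "bounded_linear (transpose :: real^'n^'n \<Rightarrow> real^'n^'n)"
    by (simp add: linear_conv_bounded_linear[symmetric] linear_iff transpose_def vec_eq_iff)
  then have "dd (\<lambda>q. transpose (G q)) p u = transpose (dd G p u)"
    using dd_bounded_linear differentiable_G[OF p] by blast
  moreover have "dd (\<lambda>q. transpose (G q)) p = dd G p"
    using dd_cong_open[OF open_U p] G_symmetric by metis
  ultimately show ?thesis by simp
qed

lemma linear_dd_G: "p \<in> U \<Longrightarrow> linear (dd G p)"
  using dd_has_derivative differentiable_G has_derivative_linear by blast

lemma chr_commute: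
  assumes p: "p \<in> U"
  shows "chr G p u w = chr G p w u"
proof -
  have "chr_lower G p u w = chr_lower G p w u"
    unfolding chr_lower_def vec_eq_iff
    using inner_symmetric_matrix[OF dd_G_symmetric[OF p]] by (simp add: algebra_simps)
  then show ?thesis by (simp add: chr_eq_chr_lower)
qed

lemma inner_chr_lower:
  assumes p: "p \<in> U"
  shows "chr_lower G p u w \<bullet> z
    = (1/2) * (w \<bullet> (dd G p u *v z) + u \<bullet> (dd G p w *v z) - u \<bullet> (dd G p z *v w))"
proof -
  have l1: "linear (\<lambda>c. w \<bullet> (dd G p u *v c))" and l2: "linear (\<lambda>c. u \<bullet> (dd G p w *v c))"
    by (intro linearI; simp add: matrix_vector_right_distrib inner_add_right matrix_vector_mult_scaleR)+
  have l3: "linear (\<lambda>c. u \<bullet> (dd G p c *v w))"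
    using linear_dd_G[OF p]
    by (intro linearI) (simp_all add: linear_add linear_scale matrix_vector_mult_add_rdistrib
        inner_add_right scaleR_matrix_vector_assoc[symmetric])
  have "chr_lower G p u w \<bullet> z = (1/2) * ((\<Sum>k\<in>UNIV. z$k * (w \<bullet> (dd G p u *v axis k 1)))
      + (\<Sum>k\<in>UNIV. z$k * (u \<bullet> (dd G p w *v axis k 1)))
      - (\<Sum>k\<in>UNIV. z$k * (u \<bullet> (dd G p (axis k 1) *v w))))"
    unfolding chr_lower_def inner_vec_def
    by (simp add: sum_distrib_left sum.distrib sum_subtractf algebra_simps)
  then show ?thesis
    using linear_real_sum_axis[OF l1] linear_real_sum_axis[OF l2] linear_real_sum_axis[OF l3] by simp
qed

lemma gmet_chr:
  assumes p: "p \<in> U"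
  shows "gmet G p (chr G p u w) z
    = (1/2) * (w \<bullet> (dd G p u *v z) + u \<bullet> (dd G p w *v z) - u \<bullet> (dd G p z *v w))"
proof -
  have "gmet G p (chr G p u w) z = z \<bullet> chr_lower G p u w"
    using gmet_commute[OF p] unfolding gmet_def chr_eq_chr_lower
    by (metis matrix_inv_cancel(1)[OF G_invertible[OF p]])
  then show ?thesis using inner_chr_lower[OF p] by (simp add: inner_commute)
qed

lemma gmet_chr_compatible:
  assumes p: "p \<in> U"
  shows "gmet G p (chr G p u a) b + gmet G p a (chr G p u b) = a \<bullet> (dd G p u *v b)"
  using gmet_chr[OF p, of u a b] gmet_chr[OF p, of u b a] gmet_commute[OF p, of a "chr G p u b"]
    inner_symmetric_matrix[OF dd_G_symmetric[OF p], of a u b]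
  by (simp add: algebra_simps)

lemma linear_chr:
  assumes p: "p \<in> U"
  shows "linear (chr G p u)"
proof -
  have "linear (chr_lower G p u)"
    unfolding chr_lower_def using linear_dd_G[OF p]
    by (intro linearI) (simp_all add: vec_eq_iff linear_add linear_scale matrix_vector_mult_add_rdistrib
        inner_add_right inner_add_left matrix_vector_right_distrib scaleR_matrix_vector_assoc[symmetric]
        matrix_vector_mult_scaleR algebra_simps)
  then show ?thesis unfolding chr_eq_chr_lower
    by (intro linearI) (simp_all add: linear_add linear_scale matrix_vector_right_distrib
        matrix_vector_mult_scaleR)
qed

lemma sasaki_like_at:
  assumes p: "p \<in> U"
  shows "dd Phi p u *v y + chr G p u (Phi p *v y) - Phi p *v chr G p u y =
     - gmet G p u y *\<^sub>R xi p - (eta p \<bullet> y) *\<^sub>R u + (2 * (eta p \<bullet> u) * (eta p \<bullet> y)) *\<^sub>R xi p"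
proof -
  have "dd (\<lambda>q. Phi q *v y) p u = dd Phi p u *v y"
    using dd_matrix_vector_mult[OF differentiable_Phi[OF p] differentiable_const, of y u] by simp
  then show ?thesis
    using sasaki_like_cov[OF smooth_vf_const smooth_vf_const p, of u y] unfolding cov_def by simp
qed

lemma chr_zero: "p \<in> U \<Longrightarrow> chr G p u 0 = 0"
  using linear_chr linear_0 by blast

lemma cov_Phi_xi:
  assumes p: "p \<in> U"
  shows "dd Phi p u *v xi p - Phi p *v chr G p u (xi p) = (eta p \<bullet> u) *\<^sub>R xi p - u"
proof -
  have "dd Phi p u *v xi p - Phi p *v chr G p u (xi p)
      = - (eta p \<bullet> u) *\<^sub>R xi p - u + (2 * (eta p \<bullet> u)) *\<^sub>R xi p"
    using sasaki_like_at[OF p, of u "xi p"]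
    by (simp add: Phi_xi[OF p] eta_xi[OF p] gmet_xi_right[OF p] chr_zero[OF p])
  also have "\<dots> = (eta p \<bullet> u) *\<^sub>R xi p - u"
    by (simp add: algebra_simps flip: scaleR_add_left)
  finally show ?thesis .
qed

lemma cov_xi_at:
  assumes p: "p \<in> U"
  shows "dd xi p u + chr G p u (xi p) = - (Phi p *v u)"
proof -
  define c where "c = dd xi p u + chr G p u (xi p)"
  have "dd (\<lambda>q. Phi q *v xi q) p = dd (\<lambda>_. 0) p"
    by (rule dd_cong_open[OF open_U p]) (simp add: Phi_xi)
  then have dPhi_xi: "Phi p *v dd xi p u + dd Phi p u *v xi p = 0"
    using dd_matrix_vector_mult[OF differentiable_Phi[OF p] differentiable_xi[OF p], of u] by simp
  have "Phi p *v chr G p u (xi p) = u + dd Phi p u *v xi p - (eta p \<bullet> u) *\<^sub>R xi p"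
    using cov_Phi_xi[OF p, of u] by (simp add: algebra_simps)
  moreover have "Phi p *v dd xi p u = - (dd Phi p u *v xi p)"
    using dPhi_xi by (simp add: eq_neg_iff_add_eq_0)
  ultimately have "Phi p *v c = u - (eta p \<bullet> u) *\<^sub>R xi p"
    unfolding c_def matrix_vector_right_distrib by simp
  then have "Phi p *v (c + Phi p *v u) = 0"
    by (simp add: matrix_vector_right_distrib Phi_Phi[OF p])
  then have vertical: "c + Phi p *v u = (eta p \<bullet> (c + Phi p *v u)) *\<^sub>R xi p"
    by (rule vertical_if_Phi_zero[OF p])
  \<comment> \<open>differentiating \<open>g(\<xi>,\<xi>) = 1\<close> shows that \<open>\<nabla>\<^sub>u\<xi>\<close> is horizontal\<close>
  have "dd (\<lambda>q. gmet G q (xi q) (xi q)) p = dd (\<lambda>_. 1) p"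
    by (rule dd_cong_open[OF open_U p]) (simp add: gmet_xi_right eta_xi)
  then have "dd xi p u \<bullet> (G p *v xi p) + xi p \<bullet> (dd G p u *v xi p) + xi p \<bullet> (G p *v dd xi p u) = 0"
    using dd_gmet[OF differentiable_G[OF p] differentiable_xi[OF p] differentiable_xi[OF p], of u]
    by simp
  moreover have "2 * gmet G p (chr G p u (xi p)) (xi p) = xi p \<bullet> (dd G p u *v xi p)"
    using gmet_chr_compatible[OF p, of u "xi p" "xi p"] gmet_commute[OF p, of "xi p"] by simp
  moreover have "xi p \<bullet> (G p *v dd xi p u) = dd xi p u \<bullet> (G p *v xi p)"
    using gmet_commute[OF p, of "xi p" "dd xi p u"] unfolding gmet_def .
  ultimately have "gmet G p c (xi p) = 0"
    unfolding c_def gmet_add_left by (simp add: gmet_def)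
  then have "eta p \<bullet> c = 0"
    using gmet_xi_right[OF p] by simp
  then have "c + Phi p *v u = 0"
    using vertical eta_Phi[OF p] by (simp add: inner_add_right)
  then show ?thesis unfolding c_def by (simp add: eq_neg_iff_add_eq_0)
qed

lemma cov_vertical:
  assumes q: "q \<in> U" and Z: "\<And>q. q \<in> U \<Longrightarrow> Z q = c *\<^sub>R xi q"
  shows "cov G X Z q = - (c *\<^sub>R (Phi q *v X q))"
proof -
  have "dd Z q = dd (\<lambda>r. c *\<^sub>R xi r) q"
    by (rule dd_cong_open[OF open_U q]) (simp add: Z)
  then have "dd Z q (X q) = c *\<^sub>R dd xi q (X q)"
    using dd_scaleR[of "\<lambda>_. c" q xi "X q"] differentiable_xi[OF q] by simp
  moreover have "chr G q (X q) (Z q) = c *\<^sub>R chr G q (X q) (xi q)"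
    using linear_chr[OF q] Z[OF q] by (simp add: linear_scale)
  ultimately show ?thesis
    unfolding cov_def using cov_xi_at[OF q, of "X q"] by (simp add: scaleR_right_distrib[symmetric])
qed

lemma curv_vertical:
  assumes p: "p \<in> U" and "A differentiable (at p)" and "B differentiable (at p)"
    and Z: "\<And>q. q \<in> U \<Longrightarrow> Z q = c *\<^sub>R xi q"
  shows "curv G A B Z p = c *\<^sub>R ((eta p \<bullet> B p) *\<^sub>R A p - (eta p \<bullet> A p) *\<^sub>R B p)"
proof -
  have cov_cov: "cov G X (cov G Y Z) p = - (c *\<^sub>R (Phi p *v dd Y p (X p)
      + (dd Phi p (X p) *v Y p + chr G p (X p) (Phi p *v Y p))))"
    if "Y differentiable (at p)" for X Y
  proof -
    have "bounded_linear (\<lambda>x::real^'n. - (c *\<^sub>R x))"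
      by (intro bounded_linear_minus bounded_linear_scaleR_right bounded_linear_ident)
    from dd_bounded_linear[OF this differentiable_matrix_vector_mult[OF differentiable_Phi[OF p] that]]
    have "dd (\<lambda>q. - (c *\<^sub>R (Phi q *v Y q))) p (X p)
        = - (c *\<^sub>R (Phi p *v dd Y p (X p) + dd Phi p (X p) *v Y p))"
      by (simp add: dd_matrix_vector_mult[OF differentiable_Phi[OF p] that])
    moreover have "dd (cov G Y Z) p = dd (\<lambda>q. - (c *\<^sub>R (Phi q *v Y q))) p"
      by (rule dd_cong_open[OF open_U p]) (simp add: cov_vertical Z)
    ultimately show ?thesis
      unfolding cov_def[of G X] using linear_chr[OF p]
      by (simp add: cov_vertical[OF p Z] linear_scale linear_neg scaleR_right_distrib)
  qed
  have sasaki: "dd Phi p (X p) *v Y p + chr G p (X p) (Phi p *v Y p) = Phi p *v chr G p (X p) (Y p)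
     - gmet G p (X p) (Y p) *\<^sub>R xi p - (eta p \<bullet> Y p) *\<^sub>R X p
     + (2 * (eta p \<bullet> X p) * (eta p \<bullet> Y p)) *\<^sub>R xi p" for X Y
    using sasaki_like_at[OF p, of "X p" "Y p"] by (simp add: algebra_simps)
  have "cov G (bracket A B) Z p = - (c *\<^sub>R (Phi p *v dd B p (A p) - Phi p *v dd A p (B p)))"
    using cov_vertical[OF p Z, of "bracket A B"]
    unfolding bracket_def by (simp add: matrix_vector_mult_diff_distrib)
  then show ?thesis
    unfolding curv_def cov_cov[OF assms(2)] cov_cov[OF assms(3)] sasaki
    using chr_commute[OF p, of "A p" "B p"] gmet_commute[OF p, of "A p" "B p"]
    by (simp add: algebra_simps)
qed

lemma ricci_xi:
  assumes p: "p \<in> U" and "Y differentiable (at p)"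
  shows "ricci G Y xi p = 2 * real n * (eta p \<bullet> Y p)"
proof -
  have "curv G (\<lambda>_. axis i 1) Y xi p = (eta p \<bullet> Y p) *\<^sub>R axis i 1 - (eta p \<bullet> axis i 1) *\<^sub>R Y p" for i
    using curv_vertical[OF p differentiable_const assms(2), of xi 1] by simp
  then have "ricci G Y xi p = (\<Sum>i\<in>UNIV. (eta p \<bullet> Y p) - eta p $ i * Y p $ i)"
    unfolding ricci_def by (simp add: inner_axis)
  also have "\<dots> = real CARD('n) * (eta p \<bullet> Y p) - (eta p \<bullet> Y p)"
    by (simp add: sum_subtractf inner_vec_def)
  finally show ?thesis using card_eq by (simp add: algebra_simps)
qed

end

locale vertical_ricci_like_soliton = sasaki_like_manifold +
  fixes k :: "real^'n \<Rightarrow> real" and lam mu nu :: real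
  assumes differentiable_on_k: "k differentiable_on U"
    and soliton: "ricci_like_soliton U Phi xi eta G (\<lambda>p. k p *\<^sub>R xi p) lam mu nu"
begin

definition Q :: "real^'n \<Rightarrow> real^'n \<Rightarrow> real^'n" where
  "Q p x = (k p - mu) *\<^sub>R (Phi p *v x) - lam *\<^sub>R x + ((2 * real n + lam) * (eta p \<bullet> x)) *\<^sub>R xi p"

lemma differentiable_k: "p \<in> U \<Longrightarrow> k differentiable (at p)"
  using differentiable_on_k differentiable_on_eq_differentiable_at open_U by blast

lemma soliton_at:
  "smooth_vf U X \<Longrightarrow> smooth_vf U Y \<Longrightarrow> p \<in> U \<Longrightarrow>
     (1/2) * lie_g G (\<lambda>p. k p *\<^sub>R xi p) X Y p + ricci G X Y p + lam * gmet G p (X p) (Y p)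
     + mu * gtil G Phi eta p (X p) (Y p) + nu * (eta p \<bullet> X p) * (eta p \<bullet> Y p) = 0"
  using soliton unfolding ricci_like_soliton_def by blast

lemma cov_potential:
  assumes p: "p \<in> U"
  shows "dd (\<lambda>q. k q *\<^sub>R xi q) p a + chr G p a (k p *\<^sub>R xi p)
    = dd k p a *\<^sub>R xi p - k p *\<^sub>R (Phi p *v a)"
proof -
  have "dd (\<lambda>q. k q *\<^sub>R xi q) p a + chr G p a (k p *\<^sub>R xi p)
      = dd k p a *\<^sub>R xi p + k p *\<^sub>R (dd xi p a + chr G p a (xi p))"
    using dd_scaleR[OF differentiable_k[OF p] differentiable_xi[OF p], of a] linear_chr[OF p]
    by (simp add: linear_scale scaleR_right_distrib)
  then show ?thesis using cov_xi_at[OF p, of a] by simp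
qed

lemma lie_g_potential:
  assumes p: "p \<in> U" and X: "X differentiable (at p)" and Y: "Y differentiable (at p)"
  shows "lie_g G (\<lambda>q. k q *\<^sub>R xi q) X Y p =
     gmet G p (dd k p (X p) *\<^sub>R xi p - k p *\<^sub>R (Phi p *v X p)) (Y p)
   + gmet G p (X p) (dd k p (Y p) *\<^sub>R xi p - k p *\<^sub>R (Phi p *v Y p))"
proof -
  define v where "v = (\<lambda>q. k q *\<^sub>R xi q)"
  have "dd (\<lambda>q. gmet G q (X q) (Y q)) p (v p) = gmet G p (dd X p (v p)) (Y p)
      + (gmet G p (chr G p (X p) (v p)) (Y p) + gmet G p (X p) (chr G p (Y p) (v p)))
      + gmet G p (X p) (dd Y p (v p))"
    using dd_gmet[OF differentiable_G[OF p] X Y, of "v p"] gmet_chr_compatible[OF p, of "v p" "X p" "Y p"]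
      chr_commute[OF p, of "v p"] unfolding gmet_def by simp
  then have "lie_g G v X Y p = gmet G p (dd v p (X p) + chr G p (X p) (v p)) (Y p)
      + gmet G p (X p) (dd v p (Y p) + chr G p (Y p) (v p))"
    unfolding lie_g_def bracket_def gmet_simps by simp
  then show ?thesis unfolding v_def using cov_potential[OF p] by simp
qed

lemma dd_k:
  assumes p: "p \<in> U"
  shows "dd k p y = - (2 * real n + lam + mu + nu) * (eta p \<bullet> y)"
proof -
  have soliton_xi: "(1/2) * (dd k p y + dd k p (xi p) * (eta p \<bullet> y))
      + (2 * real n + lam + mu + nu) * (eta p \<bullet> y) = 0" for y
  proof -
    have "lie_g G (\<lambda>p. k p *\<^sub>R xi p) (\<lambda>_. y) xi p = dd k p y + dd k p (xi p) * (eta p \<bullet> y)"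
      using lie_g_potential[OF p differentiable_const differentiable_xi[OF p], of y]
      by (simp add: gmet_simps gmet_xi_right[OF p] gmet_xi_left[OF p] Phi_xi[OF p] eta_Phi[OF p]
          eta_xi[OF p])
    moreover have "ricci G (\<lambda>_. y) xi p = 2 * real n * (eta p \<bullet> y)"
      using ricci_xi[OF p differentiable_const] by simp
    moreover have "gtil G Phi eta p y (xi p) = eta p \<bullet> y"
      unfolding gtil_def by (simp add: Phi_xi[OF p] eta_xi[OF p] gmet_simps)
    ultimately show ?thesis
      using soliton_at[OF smooth_vf_const smooth_xi p, of y] gmet_xi_right[OF p, of y] eta_xi[OF p]
      by (simp add: algebra_simps)
  qed
  from soliton_xi[of "xi p"] have "dd k p (xi p) = - (2 * real n + lam + mu + nu)"
    using eta_xi[OF p] by simp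
  with soliton_xi[of y] show ?thesis by (simp add: algebra_simps)
qed

lemma ricci_eq_gmet_Q:
  assumes X: "smooth_vf U X" and Y: "smooth_vf U Y" and p: "p \<in> U"
  shows "ricci G X Y p = gmet G p (Q p (X p)) (Y p)"
proof -
  have dX: "X differentiable (at p)" and dY: "Y differentiable (at p)"
    using X Y p cinf_on_differentiable unfolding smooth_vf_def by blast+
  have "lie_g G (\<lambda>p. k p *\<^sub>R xi p) X Y p
      = - 2 * (2 * real n + lam + mu + nu) * (eta p \<bullet> X p) * (eta p \<bullet> Y p)
        - 2 * k p * gmet G p (Phi p *v X p) (Y p)"
    using lie_g_potential[OF p dX dY] dd_k[OF p] gmet_Phi_commute[OF p, of "X p" "Y p"]
    by (simp add: gmet_simps gmet_xi_right[OF p] gmet_xi_left[OF p] algebra_simps)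
  moreover have "gtil G Phi eta p (X p) (Y p)
      = gmet G p (Phi p *v X p) (Y p) + (eta p \<bullet> X p) * (eta p \<bullet> Y p)"
    unfolding gtil_def using gmet_Phi_commute[OF p, of "X p" "Y p"] by simp
  moreover have "gmet G p (Q p (X p)) (Y p) = (k p - mu) * gmet G p (Phi p *v X p) (Y p)
      - lam * gmet G p (X p) (Y p) + (2 * real n + lam) * (eta p \<bullet> X p) * (eta p \<bullet> Y p)"
    unfolding Q_def by (simp add: gmet_simps gmet_xi_left[OF p])
  ultimately show ?thesis
    using soliton_at[OF X Y p] by (simp add: algebra_simps)
qed

lemma ricci_op_eq_Q:
  assumes X: "smooth_vf U X" and p: "p \<in> U"
  shows "ricci_op G X p = Q p (X p)"
proof -
  have "(\<chi> j. ricci G X (\<lambda>_. axis j 1) p) = G p *v Q p (X p)"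
  proof (subst vec_eq_iff, intro allI)
    fix j
    have "ricci G X (\<lambda>_. axis j 1) p = gmet G p (axis j 1) (Q p (X p))"
      using ricci_eq_gmet_Q[OF X smooth_vf_const p] gmet_commute[OF p] by simp
    then show "(\<chi> j. ricci G X (\<lambda>_. axis j 1) p) $ j = (G p *v Q p (X p)) $ j"
      unfolding gmet_def by (simp add: inner_axis')
  qed
  then show ?thesis
    unfolding ricci_op_def using matrix_inv_cancel(2)[OF G_invertible[OF p]] by simp
qed

lemma ricci_op_xi:
  assumes q: "q \<in> U"
  shows "ricci_op G xi q = (2 * real n) *\<^sub>R xi q"
  unfolding ricci_op_eq_Q[OF smooth_xi q] Q_def Phi_xi[OF q] eta_xi[OF q]
  by (simp add: algebra_simps flip: scaleR_add_left)

lemma gmet_Q_commute: "p \<in> U \<Longrightarrow> gmet G p (Q p y) w = gmet G p y (Q p w)"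
  unfolding Q_def using gmet_Phi_commute[of p y w]
  by (simp add: gmet_simps gmet_xi_right gmet_xi_left algebra_simps)

lemma differentiable_Q: "p \<in> U \<Longrightarrow> (\<lambda>q. Q q y) differentiable (at p)"
  unfolding Q_def
  using differentiable_k differentiable_xi differentiable_eta
    differentiable_matrix_vector_mult[OF differentiable_Phi differentiable_const]
  by (intro differentiable_diff differentiable_add differentiable_scaleR differentiable_mult
      differentiable_inner differentiable_const) auto

lemma gmet_horizontal_eq_0_if_QR_zero:
  assumes QR: "QR_zero U G" and p: "p \<in> U" and y: "eta p \<bullet> y = 0"
  shows "gmet G p y w = 0"
proof -
  have xi_vertical: "xi q = 1 *\<^sub>R xi q" if "q \<in> U" for q
    by simp
  have Qy: "ricci_op G (\<lambda>_. y) q = Q q y" if "q \<in> U" for q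
    using ricci_op_eq_Q[OF smooth_vf_const that] by simp
  have differentiable_Qxi: "ricci_op G xi differentiable (at p)"
    using differentiable_cong_open[OF open_U p ricci_op_xi
        differentiable_scaleR[OF differentiable_const differentiable_xi[OF p]]] .
  have differentiable_Qy: "ricci_op G (\<lambda>_. y) differentiable (at p)"
    using differentiable_cong_open[OF open_U p Qy differentiable_Q[OF p]] .
  have eta_Qy: "eta p \<bullet> Q p y = 0"
    unfolding Q_def using y eta_Phi[OF p] eta_xi[OF p] by (simp add: inner_diff_right inner_add_right)
  have curv_xi_y: "curv G xi (\<lambda>_. y) xi p = - y"
    using curv_vertical[OF p differentiable_xi[OF p] differentiable_const xi_vertical] y eta_xi[OF p]
    by simp
  have curv_Qxi_y: "curv G (ricci_op G xi) (\<lambda>_. y) xi p = - ((2 * real n) *\<^sub>R y)"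
    using curv_vertical[OF p differentiable_Qxi differentiable_const xi_vertical] y
      eta_xi[OF p] ricci_op_xi[OF p] by simp
  have curv_xi_Qy: "curv G xi (ricci_op G (\<lambda>_. y)) xi p = - Q p y"
    using curv_vertical[OF p differentiable_xi[OF p] differentiable_Qy xi_vertical] eta_Qy
      eta_xi[OF p] Qy[OF p] by simp
  have curv_xi_y_Qxi: "curv G xi (\<lambda>_. y) (ricci_op G xi) p = - ((2 * real n) *\<^sub>R y)"
    using curv_vertical[OF p differentiable_xi[OF p] differentiable_const ricci_op_xi] y eta_xi[OF p]
    by simp
  have "R4 G xi (\<lambda>_. y) xi (ricci_op G (\<lambda>_. w)) p - R4 G (ricci_op G xi) (\<lambda>_. y) xi (\<lambda>_. w) p
      - R4 G xi (ricci_op G (\<lambda>_. y)) xi (\<lambda>_. w) p - R4 G xi (\<lambda>_. y) (ricci_op G xi) (\<lambda>_. w) p = 0"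
    using QR smooth_xi smooth_vf_const p unfolding QR_zero_def by blast
  then have "4 * real n * gmet G p y w = 0"
    unfolding R4_def curv_xi_y curv_Qxi_y curv_xi_Qy curv_xi_y_Qxi ricci_op_eq_Q[OF smooth_vf_const p]
    using gmet_Q_commute[OF p, of y w] by (simp add: gmet_simps algebra_simps)
  then show ?thesis using n_ge_1 by simp
qed

lemma not_QR_zero:
  assumes "U \<noteq> {}"
  shows "\<not> QR_zero U G"
proof
  assume QR: "QR_zero U G"
  obtain p where p: "p \<in> U" using assms by blast
  obtain u where "Phi p *v u \<noteq> 0" using Phi_nonzero[OF p] by blast
  moreover have "gmet G p (Phi p *v u) w = 0" for w
    using gmet_horizontal_eq_0_if_QR_zero[OF QR p eta_Phi[OF p]] .
  ultimately show False using gmet_nondegenerate[OF p] by blast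
qed

end

theorem mainTheorem11:
  fixes U :: "(real^'n::finite) set" and n :: nat
    and Phi G :: "real^'n \<Rightarrow> real^'n^'n" and xi eta :: "real^'n \<Rightarrow> real^'n"
  assumes "U \<noteq> {}"
    and "sasaki_like U n Phi xi eta G"
    and "QR_zero U G"
  shows "\<not> (\<exists>(k :: real^'n \<Rightarrow> real) lam mu nu. k differentiable_on U \<and>
            ricci_like_soliton U Phi xi eta G (\<lambda>p. k p *\<^sub>R xi p) lam mu nu)"
proof
  assume "\<exists>(k :: real^'n \<Rightarrow> real) lam mu nu. k differentiable_on U \<and>
            ricci_like_soliton U Phi xi eta G (\<lambda>p. k p *\<^sub>R xi p) lam mu nu"
  then obtain k lam mu nu where "k differentiable_on U"
    and "ricci_like_soliton U Phi xi eta G (\<lambda>p. k p *\<^sub>R xi p) lam mu nu"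
    by blast
  then interpret vertical_ricci_like_soliton U n Phi G xi eta k lam mu nu
    using assms(2) by unfold_locales
  show False using not_QR_zero assms(1,3) by blast
qed

end
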